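(* Let $\lambda\in P_I^+$, let $w_0^{I,\lambda}$ be the longest element of $W_{I,\lambda}$ and $w_0^I$ the longest element of $W_I$. Then $\widetilde\lambda=w_0^{I,\lambda}\bigl(\lambda-w_0^I\,v(w_0^I\lambda)^{-1}\rho(k)\bigr)$.
   Context: Let $\mathfrak a$ be a Euclidean space with inner product $(\cdot,\cdot)$, $R\subset\mathfrak a^*$ a root system with Weyl group $W$, positive roots $R^+$, simple reflections $S$. Let $P$ be the weight lattice, $P^+$ the dominant weights and $P^-=-P^+$. Let $k=(k_\alpha)_{\alpha\in R}$ be a $W$-invariant multiplicity function and $\rho(k)=\frac12\sum_{\alpha\in R^+}k_\alpha\alpha$. For $\lambda\in P$ let $v(\lambda)$ be the element of minimal length in $W$ with $v(\lambda)\lambda\in P^-$, and set $\widetilde\lambda=\lambda-v(\lambda)^{-1}\rho(k)$. Let $I\subset S$, $W_I$ the parabolic subgroup generated by $I$, $R_I^+$ its positive roots, $P_I^+=\{\lambda\in P:(\lambda,\alpha)\ge0\ \forall\alpha\in R_I^+\}$, and $W_{I,\lambda}$ the stabilizer of $\lambda$ in $W_I$. *)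

theory Defs
  imports "HOL-Analysis.Analysis"
begin

text \<open>We identify the dual space with the Euclidean space itself via the inner product.\<close>

definition refl :: "'a::real_inner \<Rightarrow> 'a \<Rightarrow> 'a" where
  "refl \<alpha> x = x - (2 * (x \<bullet> \<alpha>) / (\<alpha> \<bullet> \<alpha>)) *\<^sub>R \<alpha>"

definition root_system :: "'a::euclidean_space set \<Rightarrow> bool" where
  "root_system R \<longleftrightarrow> finite R \<and> 0 \<notin> R \<and> span R = UNIV \<and>
     (\<forall>\<alpha>\<in>R. \<forall>\<beta>\<in>R. refl \<alpha> \<beta> \<in> R \<and> 2 * (\<beta> \<bullet> \<alpha>) / (\<alpha> \<bullet> \<alpha>) \<in> \<int>)"

text \<open>A positive system is determined by a regular vector \<open>\<xi>\<close>.\<close>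
definition regular :: "'a::euclidean_space set \<Rightarrow> 'a \<Rightarrow> bool" where
  "regular R \<xi> \<longleftrightarrow> (\<forall>\<alpha>\<in>R. \<alpha> \<bullet> \<xi> \<noteq> 0)"

definition pos_roots :: "'a::euclidean_space set \<Rightarrow> 'a \<Rightarrow> 'a set" where
  "pos_roots R \<xi> = {\<alpha>\<in>R. \<alpha> \<bullet> \<xi> > 0}"

definition simple_roots :: "'a::euclidean_space set \<Rightarrow> 'a \<Rightarrow> 'a set" where
  "simple_roots R \<xi> = {\<alpha>\<in>pos_roots R \<xi>.
      \<not> (\<exists>\<beta>\<in>pos_roots R \<xi>. \<exists>\<gamma>\<in>pos_roots R \<xi>. \<alpha> = \<beta> + \<gamma>)}"

text \<open>Group generated by a set of involutions (closure under composition).\<close>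
inductive_set gen_by :: "('a \<Rightarrow> 'a) set \<Rightarrow> ('a \<Rightarrow> 'a) set" for G where
  gen_id: "id \<in> gen_by G"
| gen_step: "g \<in> G \<Longrightarrow> w \<in> gen_by G \<Longrightarrow> g \<circ> w \<in> gen_by G"

definition weyl :: "'a::euclidean_space set \<Rightarrow> ('a \<Rightarrow> 'a) set" where
  "weyl R = gen_by (refl ` R)"

definition wlength :: "'a::euclidean_space set \<Rightarrow> 'a \<Rightarrow> ('a \<Rightarrow> 'a) \<Rightarrow> nat" where
  "wlength R \<xi> w = (LEAST n. \<exists>xs. length xs = n \<and> set xs \<subseteq> simple_roots R \<xi> \<and>
                              w = foldr (\<lambda>\<alpha> f. refl \<alpha> \<circ> f) xs id)"

definition weights :: "'a::euclidean_space set \<Rightarrow> 'a set" where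
  "weights R = {\<mu>. \<forall>\<alpha>\<in>R. 2 * (\<mu> \<bullet> \<alpha>) / (\<alpha> \<bullet> \<alpha>) \<in> \<int>}"

definition dominant :: "'a::euclidean_space set \<Rightarrow> 'a \<Rightarrow> 'a set" where
  "dominant R \<xi> = {\<mu>\<in>weights R. \<forall>\<alpha>\<in>pos_roots R \<xi>. \<mu> \<bullet> \<alpha> \<ge> 0}"

definition antidominant :: "'a::euclidean_space set \<Rightarrow> 'a \<Rightarrow> 'a set" where
  "antidominant R \<xi> = uminus ` dominant R \<xi>"

definition mult_fun :: "'a::euclidean_space set \<Rightarrow> ('a \<Rightarrow> real) \<Rightarrow> bool" where
  "mult_fun R k \<longleftrightarrow> (\<forall>w\<in>weyl R. \<forall>\<alpha>\<in>R. k (w \<alpha>) = k \<alpha>)"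

definition rho :: "'a::euclidean_space set \<Rightarrow> 'a \<Rightarrow> ('a \<Rightarrow> real) \<Rightarrow> 'a" where
  "rho R \<xi> k = (1/2) *\<^sub>R (\<Sum>\<alpha>\<in>pos_roots R \<xi>. k \<alpha> *\<^sub>R \<alpha>)"

definition vmin :: "'a::euclidean_space set \<Rightarrow> 'a \<Rightarrow> 'a \<Rightarrow> ('a \<Rightarrow> 'a)" where
  "vmin R \<xi> \<mu> = (SOME v. v \<in> weyl R \<and> v \<mu> \<in> antidominant R \<xi> \<and>
      (\<forall>u\<in>weyl R. u \<mu> \<in> antidominant R \<xi> \<longrightarrow> wlength R \<xi> v \<le> wlength R \<xi> u))"

definition lam_tilde :: "'a::euclidean_space set \<Rightarrow> 'a \<Rightarrow> ('a \<Rightarrow> real) \<Rightarrow> 'a \<Rightarrow> 'a" where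
  "lam_tilde R \<xi> k \<mu> = \<mu> - inv (vmin R \<xi> \<mu>) (rho R \<xi> k)"

definition parabolic :: "'a::euclidean_space set \<Rightarrow> ('a \<Rightarrow> 'a) set" where
  "parabolic I = gen_by (refl ` I)"

definition pos_roots_I :: "'a::euclidean_space set \<Rightarrow> 'a \<Rightarrow> 'a set \<Rightarrow> 'a set" where
  "pos_roots_I R \<xi> I = pos_roots R \<xi> \<inter> span I"

definition dominant_I :: "'a::euclidean_space set \<Rightarrow> 'a \<Rightarrow> 'a set \<Rightarrow> 'a set" where
  "dominant_I R \<xi> I = {\<mu>\<in>weights R. \<forall>\<alpha>\<in>pos_roots_I R \<xi> I. \<mu> \<bullet> \<alpha> \<ge> 0}"

definition stab_I :: "'a::euclidean_space set \<Rightarrow> 'a \<Rightarrow> ('a \<Rightarrow> 'a) set" where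
  "stab_I I \<mu> = {w\<in>parabolic I. w \<mu> = \<mu>}"

definition longest :: "'a::euclidean_space set \<Rightarrow> 'a \<Rightarrow> ('a \<Rightarrow> 'a) set \<Rightarrow> ('a \<Rightarrow> 'a)" where
  "longest R \<xi> A = (SOME w. w \<in> A \<and> (\<forall>u\<in>A. wlength R \<xi> u \<le> wlength R \<xi> w))"

end

theory Submission
  imports Defs
begin

text \<open>
  The element \<open>v(\<mu>)\<close> is determined by the set of roots it makes positive: \<open>v(\<mu>) \<gamma> > 0\<close>
  iff \<open>(\<mu>, \<gamma>) < 0\<close>, or \<open>(\<mu>, \<gamma>) = 0\<close> and \<open>\<gamma> > 0\<close>; this follows from the minimality of
  its length via the deletion condition. The longest element \<open>w\<^sub>0\<close> of \<open>W\<^sub>I\<close> is an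
  involution sending the positive roots of \<open>R\<^sub>I\<close> to negative roots and permuting the other
  positive roots, and the longest element \<open>z\<close> of the stabiliser \<open>W\<^sub>I\<^sub>,\<^sub>\<mu>\<close> fixes \<open>\<mu>\<close>
  and sends the positive roots of \<open>R\<^sub>I\<close> orthogonal to \<open>\<mu>\<close> to negative roots. With these
  facts one checks that \<open>z w\<^sub>0 v(w\<^sub>0 \<mu>)\<inverse>\<close> satisfies the characterisation of \<open>v(\<mu>)\<inverse>\<close>;
  the formula follows by linearity since \<open>z\<close> fixes \<open>\<mu>\<close>.
\<close>

section \<open>Reflections\<close>

lemma linear_refl: "linear (refl a)"
  by (rule linearI) (simp_all add: refl_def inner_add_left add_divide_distrib algebra_simps)

lemma refl_refl [simp]: "a \<noteq> 0 \<Longrightarrow> refl a (refl a x) = x"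
  by (simp add: refl_def inner_diff_left algebra_simps)

lemma refl_self: "a \<noteq> 0 \<Longrightarrow> refl a a = - a"
  by (simp add: refl_def algebra_simps scaleR_2)

lemma refl_orthogonal: "x \<bullet> a = 0 \<Longrightarrow> refl a x = x"
  by (simp add: refl_def)

lemma refl_scaleR_root: "c \<noteq> 0 \<Longrightarrow> refl (c *\<^sub>R a) = refl a"
  by (rule ext) (simp add: refl_def field_simps)

lemma refl_diff_in_span: "a \<in> S \<Longrightarrow> refl a x - x \<in> span S"
  by (simp add: refl_def span_neg span_scale span_base)

lemma orthogonal_transformation_refl: "a \<noteq> 0 \<Longrightarrow> orthogonal_transformation (refl a)"
  unfolding orthogonal_transformation_def
  by (simp add: linear_refl refl_def inner_diff_left inner_diff_right algebra_simps power2_eq_square)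
     (simp add: field_simps inner_commute)

lemma refl_inner_refl: "a \<noteq> 0 \<Longrightarrow> refl a x \<bullet> refl a y = x \<bullet> y"
  using orthogonal_transformation_refl[of a] unfolding orthogonal_transformation_def by blast

lemma refl_adjoint: "a \<noteq> 0 \<Longrightarrow> refl a x \<bullet> y = x \<bullet> refl a y"
  using refl_inner_refl[of a x "refl a y"] by simp

lemma orthogonal_transformation_refl_conj:
  "orthogonal_transformation w \<Longrightarrow> w (refl a x) = refl (w a) (w x)"
  by (simp add: orthogonal_transformation_def refl_def linear_diff linear_cmul)

lemma refl_eq_conj_refl_refl: "a \<noteq> 0 \<Longrightarrow> refl b = refl a \<circ> refl (refl a b) \<circ> refl a"
  using orthogonal_transformation_refl_conj[OF orthogonal_transformation_refl, of a b]
  by (simp add: fun_eq_iff) (metis refl_refl)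

section \<open>Groups generated by reflections\<close>

lemma gen_by_base: "g \<in> G \<Longrightarrow> g \<in> gen_by G"
  using gen_by.gen_step[OF _ gen_by.gen_id] by fastforce

lemma gen_by_comp: "a \<in> gen_by G \<Longrightarrow> b \<in> gen_by G \<Longrightarrow> a \<circ> b \<in> gen_by G"
  by (induction rule: gen_by.induct) (auto simp: comp_assoc intro: gen_by.intros)

lemma gen_by_mono: "G \<subseteq> H \<Longrightarrow> gen_by G \<subseteq> gen_by H"
proof
  fix w assume "w \<in> gen_by G" "G \<subseteq> H"
  then show "w \<in> gen_by H"
    by (induction rule: gen_by.induct) (auto intro: gen_by.intros)
qed

lemma gen_by_refl_orthogonal_transformation:
  "w \<in> gen_by (refl ` S) \<Longrightarrow> 0 \<notin> S \<Longrightarrow> orthogonal_transformation w"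
proof (induction rule: gen_by.induct)
  case gen_id
  then show ?case by (simp add: id_def)
next
  case (gen_step g w)
  then obtain a where "a \<in> S" "g = refl a" by blast
  with gen_step have "orthogonal_transformation (refl a \<circ> w)"
    by (metis orthogonal_transformation_compose orthogonal_transformation_refl)
  then show ?case unfolding \<open>g = refl a\<close> .
qed

lemma gen_by_refl_closed:
  "w \<in> gen_by (refl ` S) \<Longrightarrow> (\<And>a x. a \<in> S \<Longrightarrow> x \<in> X \<Longrightarrow> refl a x \<in> X) \<Longrightarrow> x \<in> X \<Longrightarrow> w x \<in> X"
  by (induction arbitrary: x rule: gen_by.induct) auto

definition refl_prod :: "'a::real_inner list \<Rightarrow> 'a \<Rightarrow> 'a" where
  "refl_prod xs = foldr (\<lambda>\<alpha> f. refl \<alpha> \<circ> f) xs id"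

lemma refl_prod_simps [simp]: "refl_prod [] = id" "refl_prod (a # xs) = refl a \<circ> refl_prod xs"
  by (simp_all add: refl_prod_def)

lemma refl_prod_append: "refl_prod (xs @ ys) = refl_prod xs \<circ> refl_prod ys"
  by (induction xs) (simp_all add: comp_assoc)

lemma refl_prod_in_gen_by: "set xs \<subseteq> S \<Longrightarrow> refl_prod xs \<in> gen_by (refl ` S)"
  by (induction xs) (auto intro: gen_by.intros)

lemma gen_by_refl_word: "w \<in> gen_by (refl ` S) \<Longrightarrow> \<exists>xs. set xs \<subseteq> S \<and> w = refl_prod xs"
proof (induction rule: gen_by.induct)
  case gen_id
  show ?case by (intro exI[of _ "[]"]) simp
next
  case (gen_step g w)
  then obtain a xs where "a \<in> S" "g = refl a" "set xs \<subseteq> S" "w = refl_prod xs" by auto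
  then show ?case by (intro exI[of _ "a # xs"]) simp
qed

lemma refl_prod_rev_comp: "0 \<notin> set xs \<Longrightarrow> refl_prod (rev xs) \<circ> refl_prod xs = id"
proof (induction xs)
  case (Cons a xs)
  then have "refl_prod (rev (a # xs)) \<circ> refl_prod (a # xs)
      = refl_prod (rev xs) \<circ> (refl a \<circ> refl a) \<circ> refl_prod xs"
    by (simp add: refl_prod_append comp_assoc)
  also have "refl a \<circ> refl a = id" using Cons.prems by auto
  finally show ?case using Cons by simp
qed simp

lemma inv_refl_prod: "0 \<notin> set xs \<Longrightarrow> inv (refl_prod xs) = refl_prod (rev xs)"
  using refl_prod_rev_comp[of xs] refl_prod_rev_comp[of "rev xs"]
  by (intro inv_unique_comp) simp_all

lemma parabolic_id: "id \<in> parabolic I"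
  unfolding parabolic_def by (rule gen_by.gen_id)

lemma parabolic_comp: "u \<in> parabolic I \<Longrightarrow> w \<in> parabolic I \<Longrightarrow> u \<circ> w \<in> parabolic I"
  unfolding parabolic_def by (rule gen_by_comp)

lemma parabolic_refl: "\<alpha> \<in> I \<Longrightarrow> refl \<alpha> \<in> parabolic I"
  unfolding parabolic_def by (intro gen_by_base) auto

lemma parabolic_diff_in_span: "w \<in> parabolic I \<Longrightarrow> w x - x \<in> span I"
  unfolding parabolic_def
proof (induction rule: gen_by.induct)
  case gen_id
  then show ?case by (simp add: span_zero)
next
  case (gen_step g w)
  then obtain \<alpha> where \<alpha>: "\<alpha> \<in> I" "g = refl \<alpha>" by auto
  have "(refl \<alpha> (w x) - w x) + (w x - x) \<in> span I"
    using refl_diff_in_span[OF \<alpha>(1)] gen_step.IH by (rule span_add)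
  then show ?case using \<alpha> by simp
qed

lemma parabolic_span: "w \<in> parabolic I \<Longrightarrow> x \<in> span I \<Longrightarrow> w x \<in> span I"
  using parabolic_diff_in_span[of w I x] span_add[of "w x - x" I x] by simp

lemma nonneg_comb_inner_neg:
  assumes "finite J" "\<forall>\<gamma>\<in>J. 0 \<le> m \<gamma>" "(\<Sum>\<gamma>\<in>J. m \<gamma> *\<^sub>R \<gamma>) \<noteq> 0"
    and "linear w" "\<forall>\<gamma>\<in>J. 0 < m \<gamma> \<longrightarrow> w \<gamma> \<bullet> \<xi> < 0"
  shows "w (\<Sum>\<gamma>\<in>J. m \<gamma> *\<^sub>R \<gamma>) \<bullet> \<xi> < 0"
proof -
  have "\<exists>\<gamma>\<in>J. m \<gamma> > 0"
  proof (rule ccontr)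
    assume "\<not> ?thesis"
    then have "\<forall>\<gamma>\<in>J. m \<gamma> = 0" using assms(2) by force
    then show False using assms(3) by simp
  qed
  then have "\<exists>\<gamma>\<in>J. m \<gamma> * (w \<gamma> \<bullet> \<xi>) < 0"
    using assms(5) mult_pos_neg by blast
  moreover have "\<forall>\<gamma>\<in>J. m \<gamma> * (w \<gamma> \<bullet> \<xi>) \<le> 0"
    using assms(2,5) by (metis less_eq_real_def mult_nonneg_nonpos mult_zero_left)
  ultimately have "(\<Sum>\<gamma>\<in>J. m \<gamma> * (w \<gamma> \<bullet> \<xi>)) < (\<Sum>\<gamma>\<in>J. 0)"
    using assms(1) by (intro sum_strict_mono_ex1) auto
  then show ?thesis
    using assms(4) by (simp add: linear_sum linear_cmul inner_sum_left)
qed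

section \<open>Positive systems of a root system\<close>

locale positive_system =
  fixes R :: "'a::euclidean_space set" and \<xi> :: 'a
  assumes root_system: "root_system R" and regular: "regular R \<xi>"
begin

abbreviation "Rpos \<equiv> pos_roots R \<xi>"
abbreviation "\<Delta> \<equiv> simple_roots R \<xi>"

lemma finite_roots: "finite R"
  and zero_notin_roots: "0 \<notin> R"
  and span_roots: "span R = UNIV"
  and root_nonzero: "\<alpha> \<in> R \<Longrightarrow> \<alpha> \<noteq> 0"
  and refl_root: "\<alpha> \<in> R \<Longrightarrow> \<beta> \<in> R \<Longrightarrow> refl \<alpha> \<beta> \<in> R"
  and root_cartan_int: "\<alpha> \<in> R \<Longrightarrow> \<beta> \<in> R \<Longrightarrow> 2 * (\<beta> \<bullet> \<alpha>) / (\<alpha> \<bullet> \<alpha>) \<in> \<int>"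
  using root_system by (auto simp: root_system_def)

lemma uminus_root: "\<beta> \<in> R \<Longrightarrow> - \<beta> \<in> R"
  using refl_root[of \<beta> \<beta>] refl_self[OF root_nonzero] by auto

lemma pos_roots_iff: "\<beta> \<in> Rpos \<longleftrightarrow> \<beta> \<in> R \<and> \<beta> \<bullet> \<xi> > 0"
  by (auto simp: pos_roots_def)

lemma not_pos_root_iff: "\<beta> \<in> R \<Longrightarrow> \<beta> \<notin> Rpos \<longleftrightarrow> \<beta> \<bullet> \<xi> < 0"
  using regular by (auto simp: pos_roots_iff regular_def less_le)

lemma uminus_pos_root: "\<beta> \<in> R \<Longrightarrow> \<beta> \<notin> Rpos \<Longrightarrow> - \<beta> \<in> Rpos"
  using not_pos_root_iff uminus_root by (auto simp: pos_roots_iff)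

lemma simple_pos_root: "\<alpha> \<in> \<Delta> \<Longrightarrow> \<alpha> \<in> Rpos"
  by (auto simp: simple_roots_def)

lemma simple_root: "\<alpha> \<in> \<Delta> \<Longrightarrow> \<alpha> \<in> R"
  using simple_pos_root pos_roots_iff by blast

lemma simple_inner_pos: "\<alpha> \<in> \<Delta> \<Longrightarrow> \<alpha> \<bullet> \<xi> > 0"
  using simple_pos_root pos_roots_iff by blast

lemma simple_roots_nonzero: "0 \<notin> \<Delta>"
  using simple_root zero_notin_roots by blast

lemma finite_simple_roots: "finite \<Delta>"
  using finite_roots by (rule finite_subset[rotated]) (auto intro: simple_root)

lemma finite_pos_roots: "finite Rpos"
  using finite_roots by (simp add: pos_roots_def)

lemma pos_root_induct [consumes 1, case_names less]:
  assumes "\<beta> \<in> Rpos"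
    and "\<And>\<beta>. \<beta> \<in> Rpos \<Longrightarrow> (\<And>\<gamma>. \<gamma> \<in> Rpos \<Longrightarrow> \<gamma> \<bullet> \<xi> < \<beta> \<bullet> \<xi> \<Longrightarrow> P \<gamma>) \<Longrightarrow> P \<beta>"
  shows "P \<beta>"
  using assms(1)
proof (induction \<beta> rule: measure_induct_rule[where f="\<lambda>\<beta>. card {\<gamma>\<in>R. \<gamma> \<bullet> \<xi> < \<beta> \<bullet> \<xi>}"])
  case (less \<beta>)
  show ?case
  proof (rule assms(2)[OF less.prems])
    fix \<gamma> assume \<gamma>: "\<gamma> \<in> Rpos" "\<gamma> \<bullet> \<xi> < \<beta> \<bullet> \<xi>"
    then have "card {\<delta>\<in>R. \<delta> \<bullet> \<xi> < \<gamma> \<bullet> \<xi>} < card {\<delta>\<in>R. \<delta> \<bullet> \<xi> < \<beta> \<bullet> \<xi>}"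
      by (intro psubset_card_mono) (auto simp: finite_roots pos_roots_iff)
    with \<gamma> less.IH show "P \<gamma>" by blast
  qed
qed

lemma sum_simple_roots_delta:
  assumes "\<alpha> \<in> \<Delta>"
  shows "(\<Sum>\<gamma>\<in>\<Delta>. (if \<gamma> = \<alpha> then c else 0) *\<^sub>R \<gamma>) = c *\<^sub>R \<alpha>"
proof -
  have "(\<Sum>\<gamma>\<in>\<Delta>. (if \<gamma> = \<alpha> then c else 0) *\<^sub>R \<gamma>) = (\<Sum>\<gamma>\<in>\<Delta>. if \<gamma> = \<alpha> then c *\<^sub>R \<alpha> else 0)"
    by (rule sum.cong) auto
  also have "\<dots> = c *\<^sub>R \<alpha>" using assms finite_simple_roots by (simp add: sum.delta')
  finally show ?thesis .
qed

lemma pos_root_simple_decomp: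
  assumes "\<beta> \<in> Rpos"
  shows "\<exists>m. (\<forall>\<alpha>\<in>\<Delta>. 0 \<le> m \<alpha>) \<and> \<beta> = (\<Sum>\<alpha>\<in>\<Delta>. m \<alpha> *\<^sub>R \<alpha>)"
  using assms
proof (induction rule: pos_root_induct)
  case (less \<beta>)
  show ?case
  proof (cases "\<beta> \<in> \<Delta>")
    case True
    then show ?thesis
      using sum_simple_roots_delta[OF True, of 1] by (intro exI[of _ "\<lambda>\<alpha>. if \<alpha> = \<beta> then 1 else 0"]) auto
  next
    case False
    then obtain \<beta>1 \<beta>2 where \<beta>: "\<beta>1 \<in> Rpos" "\<beta>2 \<in> Rpos" "\<beta> = \<beta>1 + \<beta>2"
      using less.hyps by (auto simp: simple_roots_def)
    have "\<beta>1 \<bullet> \<xi> < \<beta> \<bullet> \<xi>" "\<beta>2 \<bullet> \<xi> < \<beta> \<bullet> \<xi>"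
      using \<beta> unfolding pos_roots_iff by (simp_all add: inner_add_left)
    with less.IH \<beta>(1,2) obtain m1 m2 where
      m1: "\<forall>\<alpha>\<in>\<Delta>. 0 \<le> m1 \<alpha>" "\<beta>1 = (\<Sum>\<alpha>\<in>\<Delta>. m1 \<alpha> *\<^sub>R \<alpha>)" and
      m2: "\<forall>\<alpha>\<in>\<Delta>. 0 \<le> m2 \<alpha>" "\<beta>2 = (\<Sum>\<alpha>\<in>\<Delta>. m2 \<alpha> *\<^sub>R \<alpha>)"
      by blast
    show ?thesis
      using m1 m2 \<open>\<beta> = \<beta>1 + \<beta>2\<close> by (intro exI[of _ "\<lambda>\<alpha>. m1 \<alpha> + m2 \<alpha>"]) (simp add: scaleR_add_left sum.distrib)
  qed
qed

lemma pos_pairing_simple_exists: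
  assumes "\<beta> \<in> Rpos" "\<mu> \<bullet> \<beta> > 0"
  shows "\<exists>\<alpha>\<in>\<Delta>. \<mu> \<bullet> \<alpha> > 0"
proof (rule ccontr)
  assume "\<not> ?thesis"
  from pos_root_simple_decomp[OF assms(1)] obtain m where
    m: "\<forall>\<alpha>\<in>\<Delta>. 0 \<le> m \<alpha>" "\<beta> = (\<Sum>\<alpha>\<in>\<Delta>. m \<alpha> *\<^sub>R \<alpha>)" by blast
  with \<open>\<not> ?thesis\<close> have "(\<Sum>\<alpha>\<in>\<Delta>. m \<alpha> * (\<mu> \<bullet> \<alpha>)) \<le> 0"
    by (intro sum_nonpos) (auto simp: not_less mult_nonneg_nonpos)
  moreover have "\<mu> \<bullet> \<beta> = (\<Sum>\<alpha>\<in>\<Delta>. m \<alpha> * (\<mu> \<bullet> \<alpha>))"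
    by (subst m(2)) (simp add: inner_sum_right)
  ultimately show False using assms(2) by simp
qed

lemma root_diff_if_inner_pos:
  assumes \<alpha>: "\<alpha> \<in> R" and \<beta>: "\<beta> \<in> R" and pos: "\<alpha> \<bullet> \<beta> > 0" and "\<alpha> \<noteq> \<beta>"
  shows "\<alpha> - \<beta> \<in> R"
proof -
  have "\<alpha> \<bullet> \<alpha> > 0" "\<beta> \<bullet> \<beta> > 0" using root_nonzero[OF \<alpha>] root_nonzero[OF \<beta>] by auto
  define p where "p = 2 * (\<alpha> \<bullet> \<beta>) / (\<beta> \<bullet> \<beta>)"
  define q where "q = 2 * (\<alpha> \<bullet> \<beta>) / (\<alpha> \<bullet> \<alpha>)"
  have "p \<in> \<int>" "q \<in> \<int>"
    using root_cartan_int[OF \<beta> \<alpha>] root_cartan_int[OF \<alpha> \<beta>] by (simp_all add: p_def q_def inner_commute)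
  moreover have "p > 0" "q > 0"
    using pos \<open>\<alpha> \<bullet> \<alpha> > 0\<close> \<open>\<beta> \<bullet> \<beta> > 0\<close> by (auto simp: p_def q_def)
  moreover have "x \<ge> 2" if "x \<in> \<int>" "x > 0" "x \<noteq> 1" for x :: real
    using that by (elim Ints_cases) simp
  ultimately consider "p = 1" | "q = 1" | "p \<ge> 2" "q \<ge> 2"
    by blast
  then show ?thesis
  proof cases
    case 1
    then have "refl \<beta> \<alpha> = \<alpha> - \<beta>" by (simp add: refl_def p_def[symmetric])
    then show ?thesis using refl_root[OF \<beta> \<alpha>] by simp
  next
    case 2
    then have "refl \<alpha> \<beta> = \<beta> - \<alpha>" by (simp add: refl_def q_def[symmetric] inner_commute)
    then show ?thesis using uminus_root[OF refl_root[OF \<alpha> \<beta>]] by simp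
  next
    case 3
    then have "\<alpha> \<bullet> \<beta> \<ge> \<beta> \<bullet> \<beta>" "\<alpha> \<bullet> \<beta> \<ge> \<alpha> \<bullet> \<alpha>"
      using \<open>\<alpha> \<bullet> \<alpha> > 0\<close> \<open>\<beta> \<bullet> \<beta> > 0\<close> by (auto simp: p_def q_def field_simps)
    then have "(\<alpha> - \<beta>) \<bullet> (\<alpha> - \<beta>) \<le> 0"
      by (simp add: inner_diff_left inner_diff_right inner_commute)
    then have "\<alpha> = \<beta>" by (metis inner_gt_zero_iff not_le eq_iff_diff_eq_0)
    with \<open>\<alpha> \<noteq> \<beta>\<close> show ?thesis by simp
  qed
qed

lemma simple_roots_obtuse:
  assumes "\<alpha> \<in> \<Delta>" "\<beta> \<in> \<Delta>" "\<alpha> \<noteq> \<beta>"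
  shows "\<alpha> \<bullet> \<beta> \<le> 0"
proof (rule ccontr)
  assume "\<not> \<alpha> \<bullet> \<beta> \<le> 0"
  then have diff: "\<alpha> - \<beta> \<in> R"
    using root_diff_if_inner_pos assms simple_root by simp
  show False
  proof (cases "\<alpha> - \<beta> \<in> Rpos")
    case True
    then have "\<alpha> = (\<alpha> - \<beta>) + \<beta>" "\<beta> \<in> Rpos" using assms simple_pos_root by auto
    with True assms(1) show False unfolding simple_roots_def by blast
  next
    case False
    then have "\<beta> - \<alpha> \<in> Rpos" using uminus_pos_root[OF diff] by simp
    moreover have "\<beta> = (\<beta> - \<alpha>) + \<alpha>" "\<alpha> \<in> Rpos" using assms simple_pos_root by auto
    ultimately show False using assms(2) unfolding simple_roots_def by blast
  qed
qed

lemma simple_roots_independent: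
  assumes "(\<Sum>\<alpha>\<in>\<Delta>. c \<alpha> *\<^sub>R \<alpha>) = 0" "\<alpha>0 \<in> \<Delta>"
  shows "c \<alpha>0 = 0"
proof -
  define P where "P = {\<alpha>\<in>\<Delta>. c \<alpha> > 0}"
  define N where "N = {\<alpha>\<in>\<Delta>. c \<alpha> < 0}"
  define x where "x = (\<Sum>\<alpha>\<in>P. c \<alpha> *\<^sub>R \<alpha>)"
  define y where "y = (\<Sum>\<alpha>\<in>N. (- c \<alpha>) *\<^sub>R \<alpha>)"
  have "finite P" "finite N" using finite_simple_roots by (auto simp: P_def N_def)
  have "(\<Sum>\<alpha>\<in>\<Delta>. c \<alpha> *\<^sub>R \<alpha>) =
      (\<Sum>\<alpha>\<in>\<Delta>. (if c \<alpha> > 0 then c \<alpha> *\<^sub>R \<alpha> else 0) + (if c \<alpha> < 0 then c \<alpha> *\<^sub>R \<alpha> else 0))"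
    by (rule sum.cong) auto
  also have "\<dots> = x - y"
    using finite_simple_roots
    by (simp add: sum.distrib sum.inter_filter x_def y_def P_def N_def sum_negf)
  finally have "x = y" using assms(1) by simp
  have "x \<bullet> y = (\<Sum>\<beta>\<in>N. \<Sum>\<alpha>\<in>P. (c \<alpha> * - c \<beta>) * (\<alpha> \<bullet> \<beta>))"
    by (simp add: x_def y_def inner_sum_left inner_sum_right sum_distrib_left sum_negf algebra_simps)
  also have "\<dots> \<le> 0"
    by (intro sum_nonpos mult_nonneg_nonpos simple_roots_obtuse) (auto simp: P_def N_def mult_le_0_iff)
  finally have "x = 0" using \<open>x = y\<close> by (metis inner_gt_zero_iff not_le)
  have "P = {}"
  proof (rule ccontr)
    assume "P \<noteq> {}"
    have "x \<bullet> \<xi> = (\<Sum>\<alpha>\<in>P. c \<alpha> * (\<alpha> \<bullet> \<xi>))" by (simp add: x_def inner_sum_left)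
    also have "\<dots> > 0"
      using \<open>finite P\<close> \<open>P \<noteq> {}\<close> simple_inner_pos by (intro sum_pos) (auto simp: P_def)
    finally show False using \<open>x = 0\<close> by simp
  qed
  moreover have "N = {}"
  proof (rule ccontr)
    assume "N \<noteq> {}"
    have "y \<bullet> \<xi> = (\<Sum>\<alpha>\<in>N. (- c \<alpha>) * (\<alpha> \<bullet> \<xi>))" by (simp add: y_def inner_sum_left)
    also have "\<dots> > 0"
      using \<open>finite N\<close> \<open>N \<noteq> {}\<close> simple_inner_pos by (intro sum_pos) (auto simp: N_def mult_neg_pos)
    finally show False using \<open>x = 0\<close> \<open>x = y\<close> by simp
  qed
  ultimately show ?thesis using assms(2) unfolding P_def N_def by (metis (mono_tags) empty_Collect_eq linorder_neqE)
qed

lemma simple_refl_pos_root: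
  assumes "\<alpha> \<in> \<Delta>" "\<beta> \<in> Rpos" "refl \<alpha> \<beta> \<notin> Rpos"
  shows "\<exists>c. \<beta> = c *\<^sub>R \<alpha>"
proof -
  have \<alpha>: "\<alpha> \<in> R" and \<beta>: "\<beta> \<in> R" using assms simple_root by (auto simp: pos_roots_iff)
  \<comment> \<open>\<open>\<beta>\<close> and \<open>- s\<^sub>\<alpha> \<beta>\<close> are nonnegative combinations of \<open>\<Delta>\<close> adding up to a multiple of \<open>\<alpha>\<close>\<close>
  define n where "n = 2 * (\<beta> \<bullet> \<alpha>) / (\<alpha> \<bullet> \<alpha>)"
  have refl_\<beta>: "refl \<alpha> \<beta> = \<beta> - n *\<^sub>R \<alpha>" by (simp add: refl_def n_def)
  have "- refl \<alpha> \<beta> \<in> Rpos" using uminus_pos_root[OF refl_root[OF \<alpha> \<beta>]] assms by simp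
  from pos_root_simple_decomp[OF this] obtain m' where
    m': "\<forall>\<gamma>\<in>\<Delta>. 0 \<le> m' \<gamma>" "- refl \<alpha> \<beta> = (\<Sum>\<gamma>\<in>\<Delta>. m' \<gamma> *\<^sub>R \<gamma>)" by blast
  from pos_root_simple_decomp[OF assms(2)] obtain m where
    m: "\<forall>\<gamma>\<in>\<Delta>. 0 \<le> m \<gamma>" "\<beta> = (\<Sum>\<gamma>\<in>\<Delta>. m \<gamma> *\<^sub>R \<gamma>)" by blast
  have "(\<Sum>\<gamma>\<in>\<Delta>. (m \<gamma> + m' \<gamma> - (if \<gamma> = \<alpha> then n else 0)) *\<^sub>R \<gamma>)
      = (\<Sum>\<gamma>\<in>\<Delta>. m \<gamma> *\<^sub>R \<gamma>) + (\<Sum>\<gamma>\<in>\<Delta>. m' \<gamma> *\<^sub>R \<gamma>) - (\<Sum>\<gamma>\<in>\<Delta>. (if \<gamma> = \<alpha> then n else 0) *\<^sub>R \<gamma>)"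
    by (simp add: scaleR_add_left scaleR_diff_left sum.distrib sum_subtractf)
  also have "\<dots> = 0"
    unfolding m(2)[symmetric] m'(2)[symmetric] sum_simple_roots_delta[OF assms(1)] refl_\<beta> by simp
  finally have sum0: "(\<Sum>\<gamma>\<in>\<Delta>. (m \<gamma> + m' \<gamma> - (if \<gamma> = \<alpha> then n else 0)) *\<^sub>R \<gamma>) = 0" .
  have "m \<gamma> = 0" if "\<gamma> \<in> \<Delta>" "\<gamma> \<noteq> \<alpha>" for \<gamma>
    using simple_roots_independent[OF sum0 that(1)] that m(1) m'(1) by force
  then have "\<beta> = (\<Sum>\<gamma>\<in>\<Delta>. (if \<gamma> = \<alpha> then m \<alpha> else 0) *\<^sub>R \<gamma>)"
    unfolding m(2) by (intro sum.cong) auto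
  then show ?thesis using sum_simple_roots_delta[OF assms(1)] by auto
qed

lemma pos_root_span_decomp:
  assumes I: "I \<subseteq> \<Delta>" and \<beta>: "\<beta> \<in> Rpos" "\<beta> \<in> span I"
  shows "\<exists>m. (\<forall>\<gamma>\<in>I. 0 \<le> m \<gamma>) \<and> \<beta> = (\<Sum>\<gamma>\<in>I. m \<gamma> *\<^sub>R \<gamma>)"
proof -
  have "finite I" using I finite_simple_roots finite_subset by blast
  then obtain d where d: "\<beta> = (\<Sum>\<gamma>\<in>I. d \<gamma> *\<^sub>R \<gamma>)" using \<beta>(2) span_finite by auto
  from pos_root_simple_decomp[OF \<beta>(1)] obtain m where
    m: "\<forall>\<gamma>\<in>\<Delta>. 0 \<le> m \<gamma>" "\<beta> = (\<Sum>\<gamma>\<in>\<Delta>. m \<gamma> *\<^sub>R \<gamma>)" by blast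
  have "(\<Sum>\<gamma>\<in>\<Delta>. (if \<gamma> \<in> I then d \<gamma> else 0) *\<^sub>R \<gamma>) = (\<Sum>\<gamma>\<in>\<Delta>. if \<gamma> \<in> I then d \<gamma> *\<^sub>R \<gamma> else 0)"
    by (rule sum.cong) auto
  also have "\<dots> = \<beta>"
    using finite_simple_roots I d by (simp add: sum.inter_restrict[symmetric] Int_absorb1)
  finally have "(\<Sum>\<gamma>\<in>\<Delta>. (m \<gamma> - (if \<gamma> \<in> I then d \<gamma> else 0)) *\<^sub>R \<gamma>) = 0"
    using m by (simp add: scaleR_diff_left sum_subtractf)
  from simple_roots_independent[OF this] have "\<forall>\<gamma>\<in>\<Delta> - I. m \<gamma> = 0" by auto
  then have "\<beta> = (\<Sum>\<gamma>\<in>I. m \<gamma> *\<^sub>R \<gamma>)"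
    unfolding m(2) using finite_simple_roots I by (intro sum.mono_neutral_right) auto
  then show ?thesis using m(1) I by auto
qed

lemma refl_pos_root_in_gen_simple:
  assumes "\<beta> \<in> Rpos"
  shows "refl \<beta> \<in> gen_by (refl ` \<Delta>)"
  using assms
proof (induction rule: pos_root_induct)
  case (less \<beta>)
  have \<beta>: "\<beta> \<in> R" using less.hyps by (simp add: pos_roots_iff)
  have "\<beta> \<bullet> \<beta> > 0" using root_nonzero[OF \<beta>] by simp
  then obtain \<alpha> where \<alpha>: "\<alpha> \<in> \<Delta>" "\<alpha> \<bullet> \<beta> > 0"
    using pos_pairing_simple_exists[OF less.hyps, of \<beta>] by (auto simp: inner_commute)
  have "\<alpha> \<noteq> 0" using simple_roots_nonzero \<alpha>(1) by blast
  have s\<alpha>: "refl \<alpha> \<in> gen_by (refl ` \<Delta>)" using \<alpha> by (intro gen_by_base) auto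
  show ?case
  proof (cases "refl \<alpha> \<beta> \<in> Rpos")
    case True
    define n where "n = 2 * (\<beta> \<bullet> \<alpha>) / (\<alpha> \<bullet> \<alpha>)"
    have "n > 0" using \<alpha>(2) \<open>\<alpha> \<noteq> 0\<close> by (simp add: n_def inner_commute)
    have "refl \<alpha> \<beta> \<bullet> \<xi> = \<beta> \<bullet> \<xi> - n * (\<alpha> \<bullet> \<xi>)"
      by (simp add: refl_def n_def inner_diff_left)
    then have "refl \<alpha> \<beta> \<bullet> \<xi> < \<beta> \<bullet> \<xi>"
      using \<open>n > 0\<close> simple_inner_pos[OF \<alpha>(1)] by simp
    with True less.IH have "refl (refl \<alpha> \<beta>) \<in> gen_by (refl ` \<Delta>)" by blast
    then show ?thesis
      unfolding refl_eq_conj_refl_refl[OF \<open>\<alpha> \<noteq> 0\<close>, of \<beta>] using s\<alpha> by (intro gen_by_comp)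
  next
    case False
    then obtain c where c: "\<beta> = c *\<^sub>R \<alpha>"
      using simple_refl_pos_root[OF \<alpha>(1) less.hyps] by blast
    then have "c \<noteq> 0" using root_nonzero[OF \<beta>] by auto
    then show ?thesis using c s\<alpha> by (simp add: refl_scaleR_root)
  qed
qed

lemma refl_root_in_gen_simple:
  assumes "\<beta> \<in> R"
  shows "refl \<beta> \<in> gen_by (refl ` \<Delta>)"
proof (cases "\<beta> \<in> Rpos")
  case True
  then show ?thesis by (rule refl_pos_root_in_gen_simple)
next
  case False
  have "refl \<beta> = refl ((-1) *\<^sub>R (- \<beta>))" by simp
  also have "\<dots> = refl (- \<beta>)" by (rule refl_scaleR_root) simp
  finally show ?thesis using refl_pos_root_in_gen_simple[OF uminus_pos_root[OF assms False]] by simp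
qed

lemma weyl_eq_gen_simple: "weyl R = gen_by (refl ` \<Delta>)"
proof
  show "weyl R \<subseteq> gen_by (refl ` \<Delta>)"
  proof
    fix w assume "w \<in> weyl R"
    then show "w \<in> gen_by (refl ` \<Delta>)" unfolding weyl_def
    proof (induction rule: gen_by.induct)
      case gen_id
      show ?case by (rule gen_by.gen_id)
    next
      case (gen_step g w)
      then obtain \<beta> where "\<beta> \<in> R" "g = refl \<beta>" by auto
      then show ?case using gen_by_comp[OF refl_root_in_gen_simple gen_step.IH] by blast
    qed
  qed
  show "gen_by (refl ` \<Delta>) \<subseteq> weyl R"
    unfolding weyl_def using simple_root by (intro gen_by_mono) auto
qed

lemma weyl_id: "id \<in> weyl R"
  unfolding weyl_def by (rule gen_by.gen_id)

lemma weyl_comp: "u \<in> weyl R \<Longrightarrow> w \<in> weyl R \<Longrightarrow> u \<circ> w \<in> weyl R"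
  unfolding weyl_def by (rule gen_by_comp)

lemma weyl_refl: "\<alpha> \<in> R \<Longrightarrow> refl \<alpha> \<in> weyl R"
  unfolding weyl_def by (intro gen_by_base) auto

lemma weyl_orthogonal_transformation: "w \<in> weyl R \<Longrightarrow> orthogonal_transformation w"
  unfolding weyl_def using gen_by_refl_orthogonal_transformation zero_notin_roots by blast

lemma weyl_linear: "w \<in> weyl R \<Longrightarrow> linear w"
  using weyl_orthogonal_transformation orthogonal_transformation_linear by blast

lemma weyl_inner: "w \<in> weyl R \<Longrightarrow> w x \<bullet> w y = x \<bullet> y"
  using weyl_orthogonal_transformation orthogonal_transformation_def by blast

lemma weyl_uminus: "w \<in> weyl R \<Longrightarrow> w (- x) = - w x"
  using linear_neg weyl_linear by blast

lemma weyl_root: "w \<in> weyl R \<Longrightarrow> \<beta> \<in> R \<Longrightarrow> w \<beta> \<in> R"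
  unfolding weyl_def using gen_by_refl_closed[of _ R R] refl_root by blast

lemma weyl_word: "w \<in> weyl R \<Longrightarrow> \<exists>xs. set xs \<subseteq> \<Delta> \<and> w = refl_prod xs"
  using gen_by_refl_word weyl_eq_gen_simple by blast

lemma refl_prod_weyl: "set xs \<subseteq> \<Delta> \<Longrightarrow> refl_prod xs \<in> weyl R"
  using refl_prod_in_gen_by weyl_eq_gen_simple by blast

lemma weyl_inv: "w \<in> weyl R \<Longrightarrow> inv w \<in> weyl R"
  using weyl_word inv_refl_prod simple_roots_nonzero refl_prod_weyl
  by (metis set_rev subset_iff)

lemma weyl_inv_apply [simp]:
  assumes "w \<in> weyl R"
  shows "inv w (w x) = x" "w (inv w x) = x"
  using orthogonal_transformation_bij[OF weyl_orthogonal_transformation[OF assms]]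
  by (simp_all add: bij_is_inj bij_is_surj surj_f_inv_f)

lemma finite_weyl: "finite (weyl R)"
proof (rule inj_on_finite)
  show "inj_on (\<lambda>w. restrict w R) (weyl R)"
  proof
    fix u w assume uw: "u \<in> weyl R" "w \<in> weyl R" and eq: "restrict u R = restrict w R"
    have "u x = w x" for x
    proof (rule linear_eq_on_span[OF weyl_linear[OF uw(1)] weyl_linear[OF uw(2)]])
      show "x \<in> span R" using span_roots by simp
      show "u \<beta> = w \<beta>" if "\<beta> \<in> R" for \<beta> using eq that by (metis restrict_apply')
    qed
    then show "u = w" by auto
  qed
  show "(\<lambda>w. restrict w R) ` weyl R \<subseteq> PiE R (\<lambda>_. R)" using weyl_root by auto
  show "finite (PiE R (\<lambda>_. R))" using finite_roots by (intro finite_PiE) auto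
qed

section \<open>Length\<close>

abbreviation "len \<equiv> wlength R \<xi>"

lemma wlength_reduced_word:
  assumes "w \<in> weyl R"
  obtains xs where "length xs = len w" "set xs \<subseteq> \<Delta>" "w = refl_prod xs"
proof -
  have "\<exists>n xs. length xs = n \<and> set xs \<subseteq> \<Delta> \<and> w = refl_prod xs"
    using weyl_word[OF assms] by blast
  from LeastI_ex[OF this[unfolded refl_prod_def]] show ?thesis
    using that unfolding wlength_def refl_prod_def by blast
qed

lemma wlength_le: "set xs \<subseteq> \<Delta> \<Longrightarrow> len (refl_prod xs) \<le> length xs"
  unfolding wlength_def refl_prod_def by (rule Least_le) auto

lemma refl_prod_comp_simple_shorter:
  assumes "set xs \<subseteq> \<Delta>" "\<alpha> \<in> \<Delta>" "refl_prod xs \<alpha> \<bullet> \<xi> < 0"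
  shows "\<exists>ys. length ys + 1 = length xs \<and> set ys \<subseteq> \<Delta> \<and> refl_prod xs \<circ> refl \<alpha> = refl_prod ys"
  using assms
proof (induction xs)
  case Nil
  then show ?case using simple_inner_pos[of \<alpha>] by simp
next
  case (Cons \<gamma> xs)
  have \<gamma>: "\<gamma> \<in> \<Delta>" and xs: "set xs \<subseteq> \<Delta>" using Cons.prems by auto
  define \<beta> where "\<beta> = refl_prod xs \<alpha>"
  have w: "refl_prod xs \<in> weyl R" using refl_prod_weyl[OF xs] .
  have \<beta>: "\<beta> \<in> R" using weyl_root[OF w simple_root[OF Cons.prems(2)]] by (simp add: \<beta>_def)
  show ?case
  proof (cases "\<beta> \<bullet> \<xi> < 0")
    case True
    with Cons.IH[OF xs Cons.prems(2)] obtain ys where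
      ys: "length ys + 1 = length xs" "set ys \<subseteq> \<Delta>" "refl_prod xs \<circ> refl \<alpha> = refl_prod ys"
      unfolding \<beta>_def by blast
    have "refl_prod (\<gamma> # xs) \<circ> refl \<alpha> = refl_prod (\<gamma> # ys)"
      by (simp only: refl_prod_simps comp_assoc ys(3))
    moreover have "length (\<gamma> # ys) + 1 = length (\<gamma> # xs)" "set (\<gamma> # ys) \<subseteq> \<Delta>" using ys \<gamma> by auto
    ultimately show ?thesis by blast
  next
    case False
    \<comment> \<open>\<open>s\<^sub>\<gamma>\<close> is the letter that makes \<open>\<beta>\<close> negative, hence \<open>\<beta>\<close> is a multiple of \<open>\<gamma>\<close>\<close>
    then have "\<beta> \<in> Rpos" using not_pos_root_iff[OF \<beta>] by simp
    moreover have "refl \<gamma> \<beta> \<notin> Rpos" using Cons.prems(3) by (simp add: \<beta>_def pos_roots_iff)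
    ultimately obtain c where c: "\<beta> = c *\<^sub>R \<gamma>" using simple_refl_pos_root[OF \<gamma>] by blast
    then have "refl \<beta> = refl \<gamma>" using root_nonzero[OF \<beta>] refl_scaleR_root by force
    have "\<gamma> \<noteq> 0" using simple_roots_nonzero \<gamma> by blast
    have "refl_prod (\<gamma> # xs) \<circ> refl \<alpha> = refl_prod xs"
    proof
      fix y
      have "refl_prod xs (refl \<alpha> y) = refl \<beta> (refl_prod xs y)"
        unfolding \<beta>_def using weyl_orthogonal_transformation[OF w] by (rule orthogonal_transformation_refl_conj)
      then show "(refl_prod (\<gamma> # xs) \<circ> refl \<alpha>) y = refl_prod xs y"
        using \<open>refl \<beta> = refl \<gamma>\<close> \<open>\<gamma> \<noteq> 0\<close> by simp
    qed
    then show ?thesis using xs by fastforce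
  qed
qed

lemma wlength_comp_simple_less:
  assumes w: "w \<in> weyl R" and \<alpha>: "\<alpha> \<in> \<Delta>" and neg: "w \<alpha> \<bullet> \<xi> < 0"
  shows "len (w \<circ> refl \<alpha>) < len w"
proof -
  obtain xs where xs: "length xs = len w" "set xs \<subseteq> \<Delta>" "w = refl_prod xs"
    using wlength_reduced_word[OF w] by blast
  with refl_prod_comp_simple_shorter[OF xs(2) \<alpha>] neg obtain ys where
    ys: "length ys + 1 = length xs" "set ys \<subseteq> \<Delta>" "w \<circ> refl \<alpha> = refl_prod ys"
    by auto
  then show ?thesis using wlength_le[OF ys(2)] xs(1) by simp
qed

lemma wlength_less_comp_simple:
  assumes w: "w \<in> weyl R" and \<alpha>: "\<alpha> \<in> \<Delta>" and pos: "w \<alpha> \<in> Rpos"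
  shows "len w < len (w \<circ> refl \<alpha>)"
proof -
  have "\<alpha> \<in> R" "\<alpha> \<noteq> 0" using \<alpha> simple_root root_nonzero by auto
  define u where "u = w \<circ> refl \<alpha>"
  have u: "u \<in> weyl R" using weyl_comp[OF w weyl_refl[OF \<open>\<alpha> \<in> R\<close>]] by (simp add: u_def)
  have "u \<alpha> = - w \<alpha>" using weyl_uminus[OF w] by (simp add: u_def refl_self[OF \<open>\<alpha> \<noteq> 0\<close>])
  then have "u \<alpha> \<bullet> \<xi> < 0" using pos by (simp add: pos_roots_iff)
  from wlength_comp_simple_less[OF u \<alpha> this] show ?thesis
    using \<open>\<alpha> \<noteq> 0\<close> by (simp add: u_def comp_assoc[symmetric] comp_def)
qed

lemma weyl_pos_roots_invariant_eq_id:
  assumes w: "w \<in> weyl R" and pos: "\<And>\<beta>. \<beta> \<in> Rpos \<Longrightarrow> w \<beta> \<in> Rpos"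
  shows "w = id"
proof -
  obtain xs where xs: "length xs = len w" "set xs \<subseteq> \<Delta>" "w = refl_prod xs"
    using wlength_reduced_word[OF w] by blast
  show ?thesis
  proof (cases xs rule: rev_exhaust)
    case Nil
    then show ?thesis using xs by simp
  next
    case (snoc ys \<alpha>)
    then have \<alpha>: "\<alpha> \<in> \<Delta>" and ys: "set ys \<subseteq> \<Delta>" using xs by auto
    have "\<alpha> \<noteq> 0" using \<alpha> simple_roots_nonzero by blast
    then have "w \<circ> refl \<alpha> = refl_prod ys" using xs snoc by (simp add: refl_prod_append fun_eq_iff)
    then have "len w < len (refl_prod ys)"
      using wlength_less_comp_simple[OF w \<alpha> pos[OF simple_pos_root[OF \<alpha>]]] by simp
    then show ?thesis using wlength_le[OF ys] xs(1) snoc by simp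
  qed
qed

lemma wlength_inv_le:
  assumes "w \<in> weyl R"
  shows "len (inv w) \<le> len w"
proof -
  obtain xs where xs: "length xs = len w" "set xs \<subseteq> \<Delta>" "w = refl_prod xs"
    using wlength_reduced_word[OF assms] by blast
  then have "inv w = refl_prod (rev xs)"
    using inv_refl_prod simple_roots_nonzero by blast
  then show ?thesis using wlength_le[of "rev xs"] xs by simp
qed

lemma wlength_inv: "w \<in> weyl R \<Longrightarrow> len (inv w) = len w"
  using wlength_inv_le[of w] wlength_inv_le[of "inv w"] weyl_inv
    inv_inv_eq[OF orthogonal_transformation_bij[OF weyl_orthogonal_transformation]]
  by (metis le_antisym)

lemma wlength_simple_comp_less:
  assumes w: "w \<in> weyl R" and \<alpha>: "\<alpha> \<in> \<Delta>" and neg: "inv w \<alpha> \<bullet> \<xi> < 0"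
  shows "len (refl \<alpha> \<circ> w) < len w"
proof -
  have "\<alpha> \<in> R" "\<alpha> \<noteq> 0" using \<alpha> simple_root root_nonzero by auto
  have "refl \<alpha> \<circ> w = inv (inv w \<circ> refl \<alpha>)"
    by (rule inv_unique_comp[symmetric]) (auto simp: w \<open>\<alpha> \<noteq> 0\<close>)
  then have "len (refl \<alpha> \<circ> w) = len (inv w \<circ> refl \<alpha>)"
    using wlength_inv weyl_comp[OF weyl_inv[OF w] weyl_refl[OF \<open>\<alpha> \<in> R\<close>]] by simp
  also have "\<dots> < len (inv w)" using wlength_comp_simple_less[OF weyl_inv[OF w] \<alpha> neg] .
  finally show ?thesis using wlength_inv[OF w] by simp
qed

lemma longest:
  assumes "A \<subseteq> weyl R" "A \<noteq> {}"
  shows "longest R \<xi> A \<in> A" "u \<in> A \<Longrightarrow> len u \<le> len (longest R \<xi> A)"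
proof -
  have "finite A" using finite_weyl assms(1) finite_subset by blast
  then have "Max (len ` A) \<in> len ` A" using assms(2) by (intro Max_in) auto
  then obtain w where "w \<in> A" "len w = Max (len ` A)" by auto
  moreover have "\<forall>u\<in>A. len u \<le> Max (len ` A)" using \<open>finite A\<close> by simp
  ultimately have "\<exists>w. w \<in> A \<and> (\<forall>u\<in>A. len u \<le> len w)" by metis
  from someI_ex[OF this] show "longest R \<xi> A \<in> A" "u \<in> A \<Longrightarrow> len u \<le> len (longest R \<xi> A)"
    unfolding longest_def by blast+
qed

section \<open>Weights and the minimal element \<open>v(\<mu>)\<close>\<close>

lemma weights_refl:
  assumes "\<mu> \<in> weights R" "\<alpha> \<in> R"
  shows "refl \<alpha> \<mu> \<in> weights R"
  unfolding weights_def
proof (intro CollectI ballI)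
  fix \<beta> assume \<beta>: "\<beta> \<in> R"
  have "\<alpha> \<noteq> 0" using root_nonzero[OF assms(2)] .
  then have "refl \<alpha> \<mu> \<bullet> \<beta> = \<mu> \<bullet> refl \<alpha> \<beta>" "\<beta> \<bullet> \<beta> = refl \<alpha> \<beta> \<bullet> refl \<alpha> \<beta>"
    using refl_adjoint refl_inner_refl[of \<alpha> \<beta> \<beta>] by auto
  moreover have "refl \<alpha> \<beta> \<in> R" using refl_root[OF assms(2) \<beta>] .
  ultimately show "2 * (refl \<alpha> \<mu> \<bullet> \<beta>) / (\<beta> \<bullet> \<beta>) \<in> \<int>"
    using assms(1) by (simp add: weights_def)
qed

lemma weights_weyl: "w \<in> weyl R \<Longrightarrow> \<mu> \<in> weights R \<Longrightarrow> w \<mu> \<in> weights R"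
  unfolding weyl_def using gen_by_refl_closed[of w R "weights R"] weights_refl by blast

lemma weights_uminus: "\<mu> \<in> weights R \<Longrightarrow> - \<mu> \<in> weights R"
  unfolding weights_def by (auto simp: minus_divide_left[symmetric])

lemma antidominant_inner_le: "\<mu> \<in> antidominant R \<xi> \<Longrightarrow> \<beta> \<in> Rpos \<Longrightarrow> \<mu> \<bullet> \<beta> \<le> 0"
  by (auto simp: antidominant_def dominant_def)

lemma simple_refl_pos_pairing:
  assumes \<alpha>: "\<alpha> \<in> \<Delta>" "\<mu> \<bullet> \<alpha> > 0" and \<beta>: "\<beta> \<in> Rpos" "refl \<alpha> \<mu> \<bullet> \<beta> > 0"
  shows "refl \<alpha> \<beta> \<in> {\<gamma>\<in>Rpos. \<mu> \<bullet> \<gamma> > 0} - {\<alpha>}"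
proof -
  have "\<alpha> \<noteq> 0" using \<alpha>(1) simple_roots_nonzero by blast
  have \<mu>: "\<mu> \<bullet> refl \<alpha> \<beta> > 0" using \<beta>(2) refl_adjoint[OF \<open>\<alpha> \<noteq> 0\<close>, of \<mu> \<beta>] by simp
  have "refl \<alpha> \<beta> \<in> Rpos"
  proof (rule ccontr)
    assume "refl \<alpha> \<beta> \<notin> Rpos"
    with simple_refl_pos_root[OF \<alpha>(1) \<beta>(1)] obtain c where c: "\<beta> = c *\<^sub>R \<alpha>" by blast
    have "c > 0"
      using \<beta>(1) c simple_inner_pos[OF \<alpha>(1)] by (simp add: pos_roots_iff zero_less_mult_iff)
    have "refl \<alpha> \<beta> = - (c *\<^sub>R \<alpha>)"
      using c by (simp add: linear_cmul[OF linear_refl] refl_self[OF \<open>\<alpha> \<noteq> 0\<close>])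
    then have "\<mu> \<bullet> refl \<alpha> \<beta> = - (c * (\<mu> \<bullet> \<alpha>))" by simp
    then show False using \<mu> mult_pos_pos[OF \<open>c > 0\<close> \<alpha>(2)] by linarith
  qed
  moreover have "refl \<alpha> \<beta> \<noteq> \<alpha>"
  proof
    assume "refl \<alpha> \<beta> = \<alpha>"
    then have "\<beta> = - \<alpha>" using refl_refl[OF \<open>\<alpha> \<noteq> 0\<close>] refl_self[OF \<open>\<alpha> \<noteq> 0\<close>] by metis
    then show False using \<beta>(1) simple_inner_pos[OF \<alpha>(1)] by (simp add: pos_roots_iff)
  qed
  ultimately show ?thesis using \<mu> by simp
qed

lemma card_pos_pairing_simple_refl_less:
  assumes \<alpha>: "\<alpha> \<in> \<Delta>" "\<mu> \<bullet> \<alpha> > 0"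
  shows "card {\<beta>\<in>Rpos. refl \<alpha> \<mu> \<bullet> \<beta> > 0} < card {\<beta>\<in>Rpos. \<mu> \<bullet> \<beta> > 0}"
proof -
  have "\<alpha> \<noteq> 0" using \<alpha>(1) simple_roots_nonzero by blast
  have "inj_on (refl \<alpha>) {\<beta>\<in>Rpos. refl \<alpha> \<mu> \<bullet> \<beta> > 0}"
    by (rule inj_onI) (metis refl_refl[OF \<open>\<alpha> \<noteq> 0\<close>])
  then have "card {\<beta>\<in>Rpos. refl \<alpha> \<mu> \<bullet> \<beta> > 0} = card (refl \<alpha> ` {\<beta>\<in>Rpos. refl \<alpha> \<mu> \<bullet> \<beta> > 0})"
    by (simp add: card_image)
  also have "\<dots> \<le> card ({\<beta>\<in>Rpos. \<mu> \<bullet> \<beta> > 0} - {\<alpha>})"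
    using simple_refl_pos_pairing[OF \<alpha>] finite_pos_roots by (intro card_mono) auto
  also have "\<dots> < card {\<beta>\<in>Rpos. \<mu> \<bullet> \<beta> > 0}"
    using finite_pos_roots \<alpha> simple_pos_root by (intro card_Diff1_less) auto
  finally show ?thesis .
qed

lemma antidominant_conjugate_exists:
  "\<mu> \<in> weights R \<Longrightarrow> \<exists>w\<in>weyl R. w \<mu> \<in> antidominant R \<xi>"
proof (induction \<mu> rule: measure_induct_rule[where f="\<lambda>\<mu>. card {\<beta>\<in>Rpos. \<mu> \<bullet> \<beta> > 0}"])
  case (less \<mu>)
  show ?case
  proof (cases "{\<beta>\<in>Rpos. \<mu> \<bullet> \<beta> > 0} = {}")
    case True
    then have "- \<mu> \<in> dominant R \<xi>" using weights_uminus[OF less.prems]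
      by (auto simp: dominant_def not_less)
    then have "\<mu> \<in> antidominant R \<xi>" unfolding antidominant_def by (metis image_eqI minus_minus)
    then show ?thesis using weyl_id by (metis id_apply)
  next
    case False
    then obtain \<alpha> where \<alpha>: "\<alpha> \<in> \<Delta>" "\<mu> \<bullet> \<alpha> > 0" using pos_pairing_simple_exists by blast
    then have "\<alpha> \<in> R" using simple_root by blast
    then have "refl \<alpha> \<mu> \<in> weights R" using weights_refl[OF less.prems] by blast
    with less.IH card_pos_pairing_simple_refl_less[OF \<alpha>] obtain w where
      w: "w \<in> weyl R" "w (refl \<alpha> \<mu>) \<in> antidominant R \<xi>" by blast
    then have "w \<circ> refl \<alpha> \<in> weyl R" "(w \<circ> refl \<alpha>) \<mu> \<in> antidominant R \<xi>"
      using weyl_comp[OF w(1) weyl_refl[OF \<open>\<alpha> \<in> R\<close>]] by simp_all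
    then show ?thesis by blast
  qed
qed

lemma vmin:
  assumes "\<mu> \<in> weights R"
  shows "vmin R \<xi> \<mu> \<in> weyl R" "vmin R \<xi> \<mu> \<mu> \<in> antidominant R \<xi>"
    and "u \<in> weyl R \<Longrightarrow> u \<mu> \<in> antidominant R \<xi> \<Longrightarrow> len (vmin R \<xi> \<mu>) \<le> len u"
proof -
  obtain w where "w \<in> weyl R" "w \<mu> \<in> antidominant R \<xi>"
    using antidominant_conjugate_exists[OF assms] by blast
  from ex_has_least_nat[of "\<lambda>v. v \<in> weyl R \<and> v \<mu> \<in> antidominant R \<xi>" w len, OF conjI[OF this]]
  have "\<exists>v. v \<in> weyl R \<and> v \<mu> \<in> antidominant R \<xi> \<and>
      (\<forall>u\<in>weyl R. u \<mu> \<in> antidominant R \<xi> \<longrightarrow> len v \<le> len u)"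
    by blast
  from someI_ex[OF this] show "vmin R \<xi> \<mu> \<in> weyl R" "vmin R \<xi> \<mu> \<mu> \<in> antidominant R \<xi>"
    and "u \<in> weyl R \<Longrightarrow> u \<mu> \<in> antidominant R \<xi> \<Longrightarrow> len (vmin R \<xi> \<mu>) \<le> len u"
    unfolding vmin_def by blast+
qed

lemma orthogonal_pos_root_simple_support:
  assumes \<nu>: "\<nu> \<in> antidominant R \<xi>" and \<delta>: "\<delta> \<in> Rpos" "\<nu> \<bullet> \<delta> = 0"
    and w: "w \<in> weyl R" "w \<delta> \<bullet> \<xi> < 0"
  shows "\<exists>\<alpha>\<in>\<Delta>. \<nu> \<bullet> \<alpha> = 0 \<and> w \<alpha> \<bullet> \<xi> < 0"
proof -
  from pos_root_simple_decomp[OF \<delta>(1)] obtain m where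
    m: "\<forall>\<alpha>\<in>\<Delta>. 0 \<le> m \<alpha>" "\<delta> = (\<Sum>\<alpha>\<in>\<Delta>. m \<alpha> *\<^sub>R \<alpha>)" by blast
  have "(\<Sum>\<alpha>\<in>\<Delta>. m \<alpha> * (w \<alpha> \<bullet> \<xi>)) = w \<delta> \<bullet> \<xi>"
    unfolding m(2) using weyl_linear[OF w(1)]
    by (simp add: linear_sum linear_cmul inner_sum_left)
  with w(2) have "\<exists>\<alpha>\<in>\<Delta>. m \<alpha> * (w \<alpha> \<bullet> \<xi>) < 0"
    using sum_nonneg[of \<Delta> "\<lambda>\<alpha>. m \<alpha> * (w \<alpha> \<bullet> \<xi>)"] by force
  then obtain \<alpha> where \<alpha>: "\<alpha> \<in> \<Delta>" "m \<alpha> * (w \<alpha> \<bullet> \<xi>) < 0" by blast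
  then have "m \<alpha> > 0" "w \<alpha> \<bullet> \<xi> < 0" using m(1) by (auto simp: mult_less_0_iff)
  \<comment> \<open>\<open>\<nu> \<bullet> \<delta> = 0\<close> is a sum of nonpositive terms \<open>m \<alpha> * (\<nu> \<bullet> \<alpha>)\<close>, so each of them vanishes\<close>
  have nonneg: "0 \<le> - (m \<alpha>' * (\<nu> \<bullet> \<alpha>'))" if "\<alpha>' \<in> \<Delta>" for \<alpha>'
    using that m(1) antidominant_inner_le[OF \<nu> simple_pos_root] by (simp add: mult_nonneg_nonpos)
  have "(\<Sum>\<alpha>\<in>\<Delta>. - (m \<alpha> * (\<nu> \<bullet> \<alpha>))) = - (\<nu> \<bullet> \<delta>)"
    unfolding m(2) by (simp add: inner_sum_right sum_negf)
  then have "m \<alpha> * (\<nu> \<bullet> \<alpha>) = 0"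
    using sum_nonneg_eq_0_iff[OF finite_simple_roots nonneg] \<alpha>(1) \<delta>(2) by simp
  then show ?thesis using \<alpha>(1) \<open>m \<alpha> > 0\<close> \<open>w \<alpha> \<bullet> \<xi> < 0\<close> by auto
qed

lemma vmin_pos_root:
  assumes \<mu>: "\<mu> \<in> weights R" and \<gamma>: "\<gamma> \<in> R" and "\<mu> \<bullet> \<gamma> < 0 \<or> (\<mu> \<bullet> \<gamma> = 0 \<and> \<gamma> \<in> Rpos)"
  shows "vmin R \<xi> \<mu> \<gamma> \<in> Rpos"
proof (rule ccontr)
  define v where "v = vmin R \<xi> \<mu>"
  have v: "v \<in> weyl R" "v \<mu> \<in> antidominant R \<xi>" using vmin[OF \<mu>] by (simp_all add: v_def)
  assume "vmin R \<xi> \<mu> \<gamma> \<notin> Rpos"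
  then have \<delta>: "- v \<gamma> \<in> Rpos"
    using uminus_pos_root[OF weyl_root[OF v(1) \<gamma>]] by (simp add: v_def)
  have "v \<mu> \<bullet> - v \<gamma> = - (\<mu> \<bullet> \<gamma>)" using weyl_inner[OF v(1)] by simp
  then have "\<mu> \<bullet> \<gamma> \<ge> 0" using antidominant_inner_le[OF v(2) \<delta>] by simp
  with assms(3) have "\<mu> \<bullet> \<gamma> = 0" "\<gamma> \<in> Rpos" by auto
  moreover have "inv v (- v \<gamma>) = - \<gamma>" using weyl_uminus[OF weyl_inv[OF v(1)]] v(1) by simp
  ultimately obtain \<alpha> where \<alpha>: "\<alpha> \<in> \<Delta>" "v \<mu> \<bullet> \<alpha> = 0" "inv v \<alpha> \<bullet> \<xi> < 0"
    using orthogonal_pos_root_simple_support[OF v(2) \<delta> _ weyl_inv[OF v(1)]]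
      \<open>v \<mu> \<bullet> - v \<gamma> = - (\<mu> \<bullet> \<gamma>)\<close> by (auto simp: pos_roots_iff)
  \<comment> \<open>then \<open>s\<^sub>\<alpha> v\<close> is a shorter element also making \<open>\<mu>\<close> antidominant\<close>
  have "\<alpha> \<in> R" using simple_root[OF \<alpha>(1)] .
  have "(refl \<alpha> \<circ> v) \<mu> = v \<mu>" using \<alpha>(2) by (simp add: refl_orthogonal inner_commute)
  then have "len v \<le> len (refl \<alpha> \<circ> v)"
    using vmin(3)[OF \<mu> weyl_comp[OF weyl_refl[OF \<open>\<alpha> \<in> R\<close>] v(1)]] v(2) by (simp add: v_def)
  with wlength_simple_comp_less[OF v(1) \<alpha>(1,3)] show False by simp
qed

lemma vmin_pos_root_iff:
  assumes \<mu>: "\<mu> \<in> weights R" and \<gamma>: "\<gamma> \<in> R"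
  shows "vmin R \<xi> \<mu> \<gamma> \<in> Rpos \<longleftrightarrow> \<mu> \<bullet> \<gamma> < 0 \<or> (\<mu> \<bullet> \<gamma> = 0 \<and> \<gamma> \<in> Rpos)"
proof
  define v where "v = vmin R \<xi> \<mu>"
  have v: "v \<in> weyl R" "v \<mu> \<in> antidominant R \<xi>" using vmin[OF \<mu>] by (simp_all add: v_def)
  assume pos: "vmin R \<xi> \<mu> \<gamma> \<in> Rpos"
  then have "\<mu> \<bullet> \<gamma> \<le> 0"
    using antidominant_inner_le[OF v(2)] weyl_inner[OF v(1)] by (metis v_def)
  moreover have "\<gamma> \<in> Rpos" if "\<mu> \<bullet> \<gamma> = 0"
  proof (rule ccontr)
    assume "\<gamma> \<notin> Rpos"
    then have "v (- \<gamma>) \<in> Rpos"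
      using vmin_pos_root[OF \<mu> uminus_root[OF \<gamma>]] uminus_pos_root[OF \<gamma>] that by (simp add: v_def)
    then show False using pos weyl_uminus[OF v(1)] by (simp add: v_def pos_roots_iff)
  qed
  ultimately show "\<mu> \<bullet> \<gamma> < 0 \<or> (\<mu> \<bullet> \<gamma> = 0 \<and> \<gamma> \<in> Rpos)" by linarith
qed (rule vmin_pos_root[OF assms])

lemma inv_vmin_eqI:
  assumes \<mu>: "\<mu> \<in> weights R" and u: "u \<in> weyl R"
    and sign: "\<And>\<beta>. \<beta> \<in> Rpos \<Longrightarrow> \<mu> \<bullet> u \<beta> < 0 \<or> (\<mu> \<bullet> u \<beta> = 0 \<and> u \<beta> \<in> Rpos)"
  shows "inv (vmin R \<xi> \<mu>) = u"
proof -
  define v where "v = vmin R \<xi> \<mu>"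
  have v: "v \<in> weyl R" using vmin[OF \<mu>] by (simp add: v_def)
  have "v \<circ> u = id"
  proof (rule weyl_pos_roots_invariant_eq_id)
    show "v \<circ> u \<in> weyl R" using weyl_comp[OF v u] .
    show "(v \<circ> u) \<beta> \<in> Rpos" if "\<beta> \<in> Rpos" for \<beta>
      using vmin_pos_root[OF \<mu> weyl_root[OF u] sign[OF that]] that
      by (simp add: v_def pos_roots_iff)
  qed
  have "inv v = inv v \<circ> (v \<circ> u)" using \<open>v \<circ> u = id\<close> by simp
  also have "\<dots> = u" using v by (simp add: fun_eq_iff)
  finally show ?thesis by (simp add: v_def)
qed

section \<open>Parabolic subgroups\<close>

lemma parabolic_weyl: "I \<subseteq> \<Delta> \<Longrightarrow> parabolic I \<subseteq> weyl R"
  unfolding parabolic_def weyl_eq_gen_simple by (intro gen_by_mono) auto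

lemma parabolic_pos_root_outside_span:
  assumes I: "I \<subseteq> \<Delta>" and w: "w \<in> parabolic I" and \<beta>: "\<beta> \<in> Rpos" "\<beta> \<notin> span I"
  shows "w \<beta> \<in> Rpos \<and> w \<beta> \<notin> span I"
  using w unfolding parabolic_def
proof (induction rule: gen_by.induct)
  case gen_id
  then show ?case using \<beta> by simp
next
  case (gen_step g w)
  then obtain \<alpha> where \<alpha>: "\<alpha> \<in> I" "g = refl \<alpha>" by auto
  have outside: "refl \<alpha> (w \<beta>) \<notin> span I"
  proof
    assume "refl \<alpha> (w \<beta>) \<in> span I"
    then have "refl \<alpha> (w \<beta>) - (refl \<alpha> (w \<beta>) - w \<beta>) \<in> span I"
      using refl_diff_in_span[OF \<alpha>(1)] by (rule span_diff)
    then show False using gen_step.IH by simp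
  qed
  have "refl \<alpha> (w \<beta>) \<in> Rpos"
  proof (rule ccontr)
    assume "refl \<alpha> (w \<beta>) \<notin> Rpos"
    with simple_refl_pos_root[of \<alpha> "w \<beta>"] \<alpha>(1) I gen_step.IH obtain c where "w \<beta> = c *\<^sub>R \<alpha>" by blast
    then have "w \<beta> \<in> span I" using \<alpha>(1) by (simp add: span_scale span_base)
    then show False using gen_step.IH by simp
  qed
  then show ?case using outside \<alpha> by simp
qed

lemma pos_root_span_image_neg:
  assumes J: "J \<subseteq> \<Delta>" and \<beta>: "\<beta> \<in> Rpos" "\<beta> \<in> span J" and w: "w \<in> weyl R"
    and neg: "\<And>\<alpha>. \<alpha> \<in> J \<Longrightarrow> w \<alpha> \<bullet> \<xi> < 0"
  shows "w \<beta> \<bullet> \<xi> < 0"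
proof -
  obtain m where m: "\<forall>\<alpha>\<in>J. 0 \<le> m \<alpha>" "\<beta> = (\<Sum>\<alpha>\<in>J. m \<alpha> *\<^sub>R \<alpha>)"
    using pos_root_span_decomp[OF J \<beta>] by blast
  have "finite J" using J finite_simple_roots finite_subset by blast
  moreover have "\<beta> \<noteq> 0" using \<beta>(1) root_nonzero by (auto simp: pos_roots_iff)
  ultimately show ?thesis
    using nonneg_comb_inner_neg[OF _ m(1) _ weyl_linear[OF w]] neg m(2) by auto
qed

lemma longest_simple_neg:
  assumes "A \<subseteq> weyl R" "w \<in> A" "\<And>u. u \<in> A \<Longrightarrow> len u \<le> len w"
    and \<alpha>: "\<alpha> \<in> \<Delta>" "w \<circ> refl \<alpha> \<in> A"
  shows "w \<alpha> \<bullet> \<xi> < 0"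
proof (rule ccontr)
  assume "\<not> w \<alpha> \<bullet> \<xi> < 0"
  then have "w \<alpha> \<in> Rpos"
    using not_pos_root_iff weyl_root assms(1,2) simple_root[OF \<alpha>(1)] by blast
  moreover have "w \<in> weyl R" using assms(1,2) by blast
  ultimately have "len w < len (w \<circ> refl \<alpha>)" using wlength_less_comp_simple \<alpha>(1) by blast
  with assms(3)[OF \<alpha>(2)] show False by simp
qed

end

locale parabolic_system = positive_system +
  fixes I :: "'a set" and \<mu> :: 'a
  assumes I_simple: "I \<subseteq> \<Delta>" and \<mu>_dominant: "\<mu> \<in> dominant_I R \<xi> I"
begin

abbreviation "w0 \<equiv> longest R \<xi> (parabolic I)"
abbreviation "w0\<mu> \<equiv> longest R \<xi> (stab_I I \<mu>)"

lemma \<mu>_weight: "\<mu> \<in> weights R"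
  using \<mu>_dominant by (simp add: dominant_I_def)

lemma \<mu>_inner_nonneg: "\<beta> \<in> Rpos \<Longrightarrow> \<beta> \<in> span I \<Longrightarrow> \<mu> \<bullet> \<beta> \<ge> 0"
  using \<mu>_dominant by (auto simp: dominant_I_def pos_roots_I_def)

lemma w0: "w0 \<in> parabolic I" "w0 \<in> weyl R" "u \<in> parabolic I \<Longrightarrow> len u \<le> len w0"
  using longest[OF parabolic_weyl[OF I_simple]] parabolic_id parabolic_weyl[OF I_simple] by blast+

lemma stab_weyl: "stab_I I \<mu> \<subseteq> weyl R"
  using parabolic_weyl[OF I_simple] by (auto simp: stab_I_def)

lemma w0\<mu>: "w0\<mu> \<in> stab_I I \<mu>" "u \<in> stab_I I \<mu> \<Longrightarrow> len u \<le> len w0\<mu>"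
proof -
  have "id \<in> stab_I I \<mu>" using parabolic_id by (simp add: stab_I_def)
  then show "w0\<mu> \<in> stab_I I \<mu>" "u \<in> stab_I I \<mu> \<Longrightarrow> len u \<le> len w0\<mu>"
    using longest[OF stab_weyl] by blast+
qed

lemma w0\<mu>_parabolic: "w0\<mu> \<in> parabolic I" and w0\<mu>_fixes: "w0\<mu> \<mu> = \<mu>" and w0\<mu>_weyl: "w0\<mu> \<in> weyl R"
  using w0\<mu>(1) stab_weyl by (auto simp: stab_I_def)

lemma w0_pos_root_neg: "\<beta> \<in> Rpos \<Longrightarrow> \<beta> \<in> span I \<Longrightarrow> w0 \<beta> \<bullet> \<xi> < 0"
  using I_simple
proof (rule pos_root_span_image_neg[OF _ _ _ w0(2)])
  show "w0 \<alpha> \<bullet> \<xi> < 0" if "\<alpha> \<in> I" for \<alpha>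
    using longest_simple_neg[OF parabolic_weyl[OF I_simple] w0(1) w0(3)] that I_simple
      parabolic_comp[OF w0(1) parabolic_refl[OF that]] by blast
qed

lemma w0_w0 [simp]: "w0 (w0 x) = x"
proof -
  have "w0 \<circ> w0 = id"
  proof (rule weyl_pos_roots_invariant_eq_id)
    show "w0 \<circ> w0 \<in> weyl R" using weyl_comp[OF w0(2) w0(2)] .
    fix \<beta> assume \<beta>: "\<beta> \<in> Rpos"
    show "(w0 \<circ> w0) \<beta> \<in> Rpos"
    proof (cases "\<beta> \<in> span I")
      case True
      have "w0 \<beta> \<in> R" using weyl_root[OF w0(2)] \<beta> by (simp add: pos_roots_iff)
      then have "- w0 \<beta> \<in> Rpos"
        using w0_pos_root_neg[OF \<beta> True] uminus_root by (simp add: pos_roots_iff)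
      moreover have "- w0 \<beta> \<in> span I" using parabolic_span[OF w0(1) True] by (rule span_neg)
      ultimately have "w0 (- w0 \<beta>) \<bullet> \<xi> < 0" by (rule w0_pos_root_neg)
      moreover have "w0 (w0 \<beta>) \<in> R" using weyl_root[OF w0(2) \<open>w0 \<beta> \<in> R\<close>] .
      ultimately show ?thesis using weyl_uminus[OF w0(2)] by (simp add: pos_roots_iff)
    next
      case False
      then show ?thesis
        using parabolic_pos_root_outside_span[OF I_simple w0(1)] \<beta> by simp
    qed
  qed
  then show ?thesis by (metis comp_apply id_apply)
qed

lemma w0\<mu>_pos_root_neg:
  assumes \<beta>: "\<beta> \<in> Rpos" "\<beta> \<in> span I" "\<mu> \<bullet> \<beta> = 0"
  shows "w0\<mu> \<beta> \<bullet> \<xi> < 0"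
proof -
  have "finite I" using I_simple finite_simple_roots finite_subset by blast
  obtain m where m: "\<forall>\<alpha>\<in>I. 0 \<le> m \<alpha>" "\<beta> = (\<Sum>\<alpha>\<in>I. m \<alpha> *\<^sub>R \<alpha>)"
    using pos_root_span_decomp[OF I_simple \<beta>(1,2)] by blast
  \<comment> \<open>only simple roots orthogonal to \<open>\<mu>\<close> occur in \<open>\<beta>\<close>, and these \<open>w0\<mu>\<close> makes negative\<close>
  have nonneg: "\<And>\<alpha>. \<alpha> \<in> I \<Longrightarrow> 0 \<le> m \<alpha> * (\<mu> \<bullet> \<alpha>)"
    using m(1) \<mu>_inner_nonneg I_simple simple_pos_root by (auto intro!: mult_nonneg_nonneg span_base)
  have "(\<Sum>\<alpha>\<in>I. m \<alpha> * (\<mu> \<bullet> \<alpha>)) = \<mu> \<bullet> \<beta>" unfolding m(2) by (simp add: inner_sum_right)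
  then have "\<forall>\<alpha>\<in>I. m \<alpha> * (\<mu> \<bullet> \<alpha>) = 0"
    using sum_nonneg_eq_0_iff[OF \<open>finite I\<close> nonneg] \<beta>(3) by simp
  moreover have "w0\<mu> \<alpha> \<bullet> \<xi> < 0" if "\<alpha> \<in> I" "\<mu> \<bullet> \<alpha> = 0" for \<alpha>
  proof -
    have "w0\<mu> \<circ> refl \<alpha> \<in> stab_I I \<mu>"
      using parabolic_comp[OF w0\<mu>_parabolic parabolic_refl[OF that(1)]] w0\<mu>_fixes that(2)
      by (simp add: stab_I_def refl_orthogonal)
    with that(1) I_simple show ?thesis
      using longest_simple_neg[OF stab_weyl w0\<mu>] by blast
  qed
  ultimately have "\<forall>\<alpha>\<in>I. 0 < m \<alpha> \<longrightarrow> w0\<mu> \<alpha> \<bullet> \<xi> < 0" by auto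
  moreover have "\<beta> \<noteq> 0" using \<beta>(1) root_nonzero by (auto simp: pos_roots_iff)
  ultimately show ?thesis
    using nonneg_comb_inner_neg[OF \<open>finite I\<close> m(1) _ weyl_linear[OF w0\<mu>_weyl]] m(2) by auto
qed

lemma w0_adjoint: "w0 x \<bullet> y = x \<bullet> w0 y"
  using weyl_inner[OF w0(2), of x "w0 y"] by simp

lemma w0_\<mu>_weight: "w0 \<mu> \<in> weights R"
  using weights_weyl[OF w0(2) \<mu>_weight] .

lemma w0\<mu>_w0_pos_root:
  assumes \<delta>: "\<delta> \<in> Rpos" and orth: "w0 \<mu> \<bullet> \<delta> = 0"
  shows "w0\<mu> (w0 \<delta>) \<in> Rpos"
proof (cases "\<delta> \<in> span I")
  case True
  have "w0 \<delta> \<in> R" using weyl_root[OF w0(2)] \<delta> by (simp add: pos_roots_iff)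
  define \<epsilon> where "\<epsilon> = - w0 \<delta>"
  have "\<epsilon> \<in> Rpos"
    using w0_pos_root_neg[OF \<delta> True] uminus_root[OF \<open>w0 \<delta> \<in> R\<close>] by (simp add: \<epsilon>_def pos_roots_iff)
  moreover have "\<epsilon> \<in> span I" using parabolic_span[OF w0(1) True] by (simp add: \<epsilon>_def span_neg)
  moreover have "\<mu> \<bullet> \<epsilon> = 0" using orth w0_adjoint[of \<mu> \<delta>] by (simp add: \<epsilon>_def)
  ultimately have "w0\<mu> \<epsilon> \<bullet> \<xi> < 0" by (rule w0\<mu>_pos_root_neg)
  moreover have "w0\<mu> (w0 \<delta>) \<in> R" using weyl_root[OF w0\<mu>_weyl \<open>w0 \<delta> \<in> R\<close>] .
  ultimately show ?thesis using weyl_uminus[OF w0\<mu>_weyl] by (simp add: \<epsilon>_def pos_roots_iff)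
next
  case False
  then show ?thesis
    using parabolic_pos_root_outside_span[OF I_simple] w0(1) w0\<mu>_parabolic \<delta> by simp
qed

lemma inv_vmin_eq:
  "inv (vmin R \<xi> \<mu>) = w0\<mu> \<circ> w0 \<circ> inv (vmin R \<xi> (w0 \<mu>))"
proof (rule inv_vmin_eqI[OF \<mu>_weight])
  define v' where "v' = vmin R \<xi> (w0 \<mu>)"
  have v': "v' \<in> weyl R" using vmin(1)[OF w0_\<mu>_weight] by (simp add: v'_def)
  show "w0\<mu> \<circ> w0 \<circ> inv v' \<in> weyl R"
    using weyl_comp[OF weyl_comp[OF w0\<mu>_weyl w0(2)] weyl_inv[OF v']] .
  fix \<beta> assume \<beta>: "\<beta> \<in> Rpos"
  define \<delta> where "\<delta> = inv v' \<beta>"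
  have \<delta>: "\<delta> \<in> R" using weyl_root[OF weyl_inv[OF v']] \<beta> by (simp add: \<delta>_def pos_roots_iff)
  have "v' \<delta> \<in> Rpos" using \<beta> v' by (simp add: \<delta>_def)
  then have "w0 \<mu> \<bullet> \<delta> < 0 \<or> (w0 \<mu> \<bullet> \<delta> = 0 \<and> \<delta> \<in> Rpos)"
    using vmin_pos_root_iff[OF w0_\<mu>_weight \<delta>] by (simp add: v'_def)
  moreover have "\<mu> \<bullet> w0\<mu> (w0 \<delta>) = w0 \<mu> \<bullet> \<delta>"
    using weyl_inner[OF w0\<mu>_weyl, of \<mu> "w0 \<delta>"] w0\<mu>_fixes w0_adjoint by simp
  ultimately show "\<mu> \<bullet> (w0\<mu> \<circ> w0 \<circ> inv v') \<beta> < 0 \<or>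
      (\<mu> \<bullet> (w0\<mu> \<circ> w0 \<circ> inv v') \<beta> = 0 \<and> (w0\<mu> \<circ> w0 \<circ> inv v') \<beta> \<in> Rpos)"
    using w0\<mu>_w0_pos_root by (auto simp: \<delta>_def)
qed

lemma lam_tilde_eq: "lam_tilde R \<xi> k \<mu> = w0\<mu> (\<mu> - w0 (inv (vmin R \<xi> (w0 \<mu>)) (rho R \<xi> k)))"
  using inv_vmin_eq linear_diff[OF weyl_linear[OF w0\<mu>_weyl]] w0\<mu>_fixes
  by (simp add: lam_tilde_def)

end

theorem mainTheorem8:
  fixes R :: "'a::euclidean_space set" and \<xi> :: 'a and k :: "'a \<Rightarrow> real"
    and I :: "'a set" and \<mu> :: 'a
  assumes "root_system R" and "regular R \<xi>" and "mult_fun R k"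
    and "I \<subseteq> simple_roots R \<xi>"
    and "\<mu> \<in> dominant_I R \<xi> I"
  shows "lam_tilde R \<xi> k \<mu> =
    longest R \<xi> (stab_I I \<mu>)
      (\<mu> - longest R \<xi> (parabolic I)
             (inv (vmin R \<xi> (longest R \<xi> (parabolic I) \<mu>)) (rho R \<xi> k)))"
proof -
  interpret parabolic_system R \<xi> I \<mu>
    using assms(1,2,4,5) by unfold_locales
  show ?thesis by (rule lam_tilde_eq)
qed

end
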